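(* Suppose $R=0$ and $f$ satisfies the Polyak–Łojasiewicz condition with constant $\mu>0$: $\|\nabla f(x)\|^2\ge2\mu(f(x)-f^\star)$ for all $x\in\mathbb{R}^d$, where $f^\star=f(x^\star)$ for a minimizer $x^\star$ of $f$. In EF-BV, suppose $\nu\in(0,1]$, $\lambda\in(0,1]$ is such that $r<1$, and $$0<\gamma\le\frac{1}{L+\tilde L\sqrt{\frac{r_{\mathrm{av}}}{r}}\frac{1}{s^\star}}.$$ For $t\ge0$ define $\Psi^t=f(x^t)-f^\star+\frac{\gamma}{2\theta^\star}\frac1n\sum_{i=1}^n\|\nabla f_i(x^t)-h_i^t\|^2$. Then for every $t\ge0$, $$\mathbb{E}[\Psi^t]\le\Big(\max\Big(1-\gamma\mu,\frac{r+1}{2}\Big)\Big)^t\Psi^0.$$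
   Context: Problem setting: $f=\frac1n\sum_{i=1}^nf_i$, where each $f_i:\mathbb{R}^d\to\mathbb{R}$ is convex and $L_i$-smooth (differentiable with $L_i$-Lipschitz gradient); $\tilde L=\sqrt{\frac1n\sum_iL_i^2}$ and $f$ is $L$-smooth with $L\le\tilde L$; $R:\mathbb{R}^d\to\mathbb{R}\cup\{+\infty\}$ is proper closed convex, $\mathrm{prox}_{\gamma R}(x)=\arg\min_y(\gamma R(y)+\frac12\|x-y\|^2)$, and a minimizer of $f+R$ exists. For $\eta\in[0,1)$, $\omega\ge0$, $\mathbb{C}(\eta,\omega)$ is the class of randomized operators $\mathcal{C}:\mathbb{R}^d\to\mathbb{R}^d$ with $\|\mathbb{E}[\mathcal{C}(x)]-x\|\le\eta\|x\|$ and $\mathbb{E}\|\mathcal{C}(x)-\mathbb{E}[\mathcal{C}(x)]\|^2\le\omega\|x\|^2$ for all $x$. Compressors $\mathcal{C}_i^t$ ($i=1,\dots,n$, $t\ge0$) all lie in $\mathbb{C}(\eta,\omega)$; those used at iteration $t$ are independent of all randomness of previous iterations; $\omega_{\mathrm{av}}\in[0,\omega]$ satisfies, for every $t$ and all $x_1,\dots,x_n$, $\mathbb{E}\|\frac1n\sum_i(\mathcal{C}_i^t(x_i)-\mathbb{E}[\mathcal{C}_i^t(x_i)])\|^2\le\frac{\omega_{\mathrm{av}}}{n}\sum_i\|x_i\|^2$. Algorithm EF-BV: given $x^0,h_1^0,\dots,h_n^0$, $\gamma>0$, $\lambda,\nu\in(0,1]$, $h^0=\frac1n\sum_ih_i^0$;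 for $t\ge0$: $d_i^t=\mathcal{C}_i^t(\nabla f_i(x^t)-h_i^t)$, $h_i^{t+1}=h_i^t+\lambda d_i^t$, $d^t=\frac1n\sum_id_i^t$, $h^{t+1}=h^t+\lambda d^t$, $g^{t+1}=h^t+\nu d^t$, $x^{t+1}=\mathrm{prox}_{\gamma R}(x^t-\gamma g^{t+1})$. Constants: $r=(1-\lambda+\lambda\eta)^2+\lambda^2\omega$, $r_{\mathrm{av}}=(1-\nu+\nu\eta)^2+\nu^2\omega_{\mathrm{av}}$, $s^\star=\sqrt{\frac{1+r}{2r}}-1$, $\theta^\star=s^\star(1+s^\star)\frac{r}{r_{\mathrm{av}}}$ (with $r>0$ and $r_{\mathrm{av}}>0$ so these are finite and positive). *)

theory Defs
  imports "HOL-Probability.Probability"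
begin

text \<open>Constants of EF-BV. r = efbv_r lam eta om, r_av = efbv_r nu eta om_av.\<close>
definition efbv_r :: "real \<Rightarrow> real \<Rightarrow> real \<Rightarrow> real" where
  "efbv_r a eta om = (1 - a + a * eta)^2 + a^2 * om"

definition s_star :: "real \<Rightarrow> real" where
  "s_star r = sqrt ((1 + r) / (2 * r)) - 1"

definition theta_star :: "real \<Rightarrow> real \<Rightarrow> real" where
  "theta_star r rav = s_star r * (1 + s_star r) * r / rav"

text \<open>EF-BV with R = 0 (so prox is the identity). The state at time t is
  (x^t, (h_i^t)_i, h^t). Cr t i is the realisation of the compressor C_i^t.\<close>
fun efbv :: "nat \<Rightarrow> real \<Rightarrow> real \<Rightarrow> real \<Rightarrow> (nat \<Rightarrow> 'a \<Rightarrow> 'a::real_vector)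
    \<Rightarrow> (nat \<Rightarrow> nat \<Rightarrow> 'a \<Rightarrow> 'a) \<Rightarrow> 'a \<Rightarrow> (nat \<Rightarrow> 'a) \<Rightarrow> nat
    \<Rightarrow> 'a \<times> (nat \<Rightarrow> 'a) \<times> 'a" where
  "efbv n gamma lam nu grad Cr x0 h0 0 = (x0, h0, (1 / real n) *\<^sub>R (\<Sum>i<n. h0 i))"
| "efbv n gamma lam nu grad Cr x0 h0 (Suc t) =
     (case efbv n gamma lam nu grad Cr x0 h0 t of (x, h, hb) \<Rightarrow>
       let d = (\<lambda>i. Cr t i (grad i x - h i));
           db = (1 / real n) *\<^sub>R (\<Sum>i<n. d i);
           g = hb + nu *\<^sub>R db
       in (x - gamma *\<^sub>R g, (\<lambda>i. h i + lam *\<^sub>R d i), hb + lam *\<^sub>R db))"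

definition efbv_lyap :: "nat \<Rightarrow> (nat \<Rightarrow> 'a::real_normed_vector \<Rightarrow> real) \<Rightarrow> (nat \<Rightarrow> 'a \<Rightarrow> 'a)
    \<Rightarrow> real \<Rightarrow> real \<Rightarrow> 'a \<Rightarrow> 'a \<times> (nat \<Rightarrow> 'a) \<times> 'a \<Rightarrow> real" where
  "efbv_lyap n fs grad gamma theta xstar st = (case st of (x, h, hb) \<Rightarrow>
     (1 / real n) * (\<Sum>i<n. fs i x) - (1 / real n) * (\<Sum>i<n. fs i xstar)
     + gamma / (2 * theta) * ((1 / real n) * (\<Sum>i<n. (norm (grad i x - h i))^2)))"

end

theory Submission
  imports Defs
begin

text \<open>Fix the state \<open>(x, h)\<close> before a step and write \<open>v i = grad i x - h i\<close>. Pointwise in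
  the seed, the descent lemma for \<open>f\<close> and Young's inequality with weight \<open>s_star r\<close> bound
  the next value of \<open>\<Psi>\<close> by \<open>f x - f xstar - \<gamma>/2 |\<nabla>f x|\<^sup>2 + \<gamma>/2 |g - \<nabla>f x|\<^sup>2\<close>
  plus \<open>c (1 + s_star r)\<close> times the mean of \<open>|v i - \<lambda> d i|\<^sup>2\<close>, where \<open>c = \<gamma> / (2 \<theta>)\<close>;
  the \<open>|g|\<^sup>2\<close> terms are absorbed by the step-size condition. In expectation over the fresh
  seed, bias plus variance of the compressors bound the two squared errors by \<open>r_av\<close> and
  \<open>r\<close> times the mean of \<open>|v i|\<^sup>2\<close>, and \<open>theta_star\<close> is exactly the weight that recombines
  them into \<open>(1 + r) / 2\<close> times the error term of \<open>\<Psi>\<close>; the PL inequality supplies the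
  factor \<open>1 - \<gamma> \<mu>\<close> on the function gap. As the seeds of different iterations are
  independent, the expectation of \<open>\<Psi>\<close> after \<open>t + 1\<close> steps can be computed by first
  integrating over the newest seed (Fubini), so the one-step bound iterates.\<close>

lemma norm_add_power2_le:
  fixes a b :: "'a::real_inner"
  assumes "s > 0"
  shows "(norm (a + b))^2 \<le> (1 + 1/s) * (norm a)^2 + (1 + s) * (norm b)^2"
proof -
  have "2 * (a \<bullet> b) \<le> 2 * (norm a * norm b)"
    using norm_cauchy_schwarz by simp
  also have "\<dots> \<le> (norm a)^2 / s + s * (norm b)^2"
  proof -
    have "0 \<le> (norm a / sqrt s - sqrt s * norm b)^2" by simp
    also have "\<dots> = (norm a)^2 / s - 2 * (norm a * norm b) + s * (norm b)^2"
      using assms by (simp add: power2_diff power_divide power_mult_distrib)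
    finally show ?thesis by simp
  qed
  finally show ?thesis
    by (simp add: power2_norm_eq_inner inner_add_left inner_add_right inner_commute algebra_simps)
qed

lemma norm_average_power2_le:
  fixes a :: "nat \<Rightarrow> 'a::real_normed_vector"
  shows "(norm ((1 / real n) *\<^sub>R (\<Sum>i<n. a i)))^2 \<le> (1 / real n) * (\<Sum>i<n. (norm (a i))^2)"
proof -
  have "(norm ((1 / real n) *\<^sub>R (\<Sum>i<n. a i)))^2 \<le> ((1 / real n) * (\<Sum>i<n. norm (a i)))^2"
    using norm_sum[of a "{..<n}"] by (intro power_mono) (auto simp: divide_right_mono)
  also have "\<dots> \<le> (1 / real n)^2 * ((\<Sum>i<n. (norm (a i))^2) * real n)"
    unfolding power_mult_distrib
    using sum_squared_le_sum_of_squares[of "\<lambda>i. norm (a i)" "{..<n}"]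
    by (intro mult_left_mono) auto
  also have "\<dots> = (1 / real n) * (\<Sum>i<n. (norm (a i))^2)"
    by (simp add: power2_eq_square)
  finally show ?thesis .
qed

lemma quadratic_upper_bound_of_lipschitz_gradient:
  fixes f :: "'a::real_inner \<Rightarrow> real"
  assumes deriv: "\<And>x. (f has_derivative (\<lambda>v. f' x \<bullet> v)) (at x)"
    and lipschitz: "\<And>x y. norm (f' x - f' y) \<le> L * norm (x - y)"
  shows "f y \<le> f x + f' x \<bullet> (y - x) + L / 2 * (norm (y - x))^2"
proof -
  define v where "v = y - x"
  define \<psi> where "\<psi> = (\<lambda>t. f (x + t *\<^sub>R v) - t * (f' x \<bullet> v) - L / 2 * t^2 * (norm v)^2)"
  have "\<psi> 1 \<le> \<psi> 0"
  proof (rule DERIV_nonpos_imp_nonincreasing[of 0 1 \<psi>])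
    fix t :: real assume t: "0 \<le> t" "t \<le> 1"
    have "((\<lambda>t. f (x + t *\<^sub>R v)) has_derivative (\<lambda>h. f' (x + t *\<^sub>R v) \<bullet> (h *\<^sub>R v))) (at t)"
      by (rule has_derivative_compose[OF _ deriv, where f'="\<lambda>h. h *\<^sub>R v"])
        (auto intro!: derivative_eq_intros)
    hence "((\<lambda>t. f (x + t *\<^sub>R v)) has_real_derivative (f' (x + t *\<^sub>R v) \<bullet> v)) (at t)"
      unfolding has_field_derivative_def by (rule has_derivative_eq_rhs) (auto simp: fun_eq_iff)
    hence "(\<psi> has_real_derivative ((f' (x + t *\<^sub>R v) - f' x) \<bullet> v - L * t * (norm v)^2)) (at t)"
      unfolding \<psi>_def by (auto intro!: derivative_eq_intros simp: inner_diff_left)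
    moreover have "(f' (x + t *\<^sub>R v) - f' x) \<bullet> v \<le> L * t * (norm v)^2"
    proof -
      have "(f' (x + t *\<^sub>R v) - f' x) \<bullet> v \<le> norm (f' (x + t *\<^sub>R v) - f' x) * norm v"
        by (rule norm_cauchy_schwarz)
      also have "\<dots> \<le> (L * norm (t *\<^sub>R v)) * norm v"
        using lipschitz[of "x + t *\<^sub>R v" x] by (intro mult_right_mono) auto
      also have "\<dots> = L * t * (norm v)^2" using t by (simp add: power2_eq_square)
      finally show ?thesis .
    qed
    ultimately show "\<exists>y. DERIV \<psi> t :> y \<and> y \<le> 0" by force
  qed simp
  thus ?thesis unfolding \<psi>_def v_def by simp
qed

lemma bias_variance_decomposition:
  fixes X :: "'w \<Rightarrow> 'a::euclidean_space"
  assumes "prob_space M" and X: "integrable M X"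
    and var: "integrable M (\<lambda>w. (norm (X w - m))^2)" and m: "m = (\<integral>w. X w \<partial>M)"
  shows "integrable M (\<lambda>w. (norm (a + c *\<^sub>R (X w - m)))^2)"
    and "(\<integral>w. (norm (a + c *\<^sub>R (X w - m)))^2 \<partial>M) = (norm a)^2 + c^2 * (\<integral>w. (norm (X w - m))^2 \<partial>M)"
proof -
  interpret prob_space M by fact
  have expand: "(norm (a + c *\<^sub>R (X w - m)))^2
      = (norm a)^2 + 2 * c * (a \<bullet> (X w - m)) + c^2 * (norm (X w - m))^2" for w
    unfolding power2_norm_eq_inner
    by (simp add: inner_add_left inner_add_right inner_commute algebra_simps power2_eq_square)
  have cross: "integrable M (\<lambda>w. a \<bullet> (X w - m))" using X by auto
  have "(\<integral>w. a \<bullet> (X w - m) \<partial>M) = a \<bullet> (\<integral>w. X w - m \<partial>M)" using X by simp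
  also have "\<dots> = 0" using X m by (simp add: Bochner_Integration.integral_diff prob_space)
  finally have cross_zero: "(\<integral>w. a \<bullet> (X w - m) \<partial>M) = 0" .
  show "integrable M (\<lambda>w. (norm (a + c *\<^sub>R (X w - m)))^2)"
    unfolding expand using cross var by auto
  show "(\<integral>w. (norm (a + c *\<^sub>R (X w - m)))^2 \<partial>M) = (norm a)^2 + c^2 * (\<integral>w. (norm (X w - m))^2 \<partial>M)"
    unfolding expand using cross var cross_zero by (simp add: prob_space)
qed

section \<open>Compressors\<close>

text \<open>The class \<open>\<C>(eta, om)\<close>: \<open>D w\<close> is the compressor realised with seed \<open>w\<close>, and the
  integrability conditions left implicit in the paper are made explicit.\<close>
definition compressor_class :: "'w measure \<Rightarrow> ('w \<Rightarrow> 'a::euclidean_space \<Rightarrow> 'a) \<Rightarrow> real \<Rightarrow> real \<Rightarrow> bool" where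
  "compressor_class M D eta om \<longleftrightarrow> (\<forall>v.
     integrable M (\<lambda>w. D w v) \<and>
     norm ((\<integral>w. D w v \<partial>M) - v) \<le> eta * norm v \<and>
     integrable M (\<lambda>w. (norm (D w v - (\<integral>w. D w v \<partial>M)))^2) \<and>
     (\<integral>w. (norm (D w v - (\<integral>w. D w v \<partial>M)))^2 \<partial>M) \<le> om * (norm v)^2)"

lemma norm_relaxed_bias_le:
  fixes v m :: "'a::real_normed_vector"
  assumes "norm (m - v) \<le> eta * norm v" and "0 \<le> a" and "a \<le> 1"
  shows "norm (v - a *\<^sub>R m) \<le> (1 - a + a * eta) * norm v"
proof -
  have "norm (v - a *\<^sub>R m) = norm ((1 - a) *\<^sub>R v - a *\<^sub>R (m - v))"
    by (simp add: algebra_simps)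
  also have "\<dots> \<le> (1 - a) * norm v + a * norm (m - v)"
    using assms(2,3) norm_triangle_ineq4[of "(1 - a) *\<^sub>R v" "a *\<^sub>R (m - v)"] by simp
  also have "\<dots> \<le> (1 - a) * norm v + a * (eta * norm v)"
    using assms by (intro add_left_mono mult_left_mono) auto
  finally show ?thesis by (simp add: algebra_simps)
qed

lemma compressor_relaxed_second_moment:
  assumes "prob_space M" and D: "compressor_class M D eta om" and "0 \<le> lam" and "lam \<le> 1"
  shows "integrable M (\<lambda>w. (norm (v - lam *\<^sub>R D w v))^2)"
    and "(\<integral>w. (norm (v - lam *\<^sub>R D w v))^2 \<partial>M) \<le> efbv_r lam eta om * (norm v)^2"
proof -
  define m where "m = (\<integral>w. D w v \<partial>M)"
  have int: "integrable M (\<lambda>w. D w v)" and bias: "norm (m - v) \<le> eta * norm v"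
    and var_int: "integrable M (\<lambda>w. (norm (D w v - m))^2)"
    and var: "(\<integral>w. (norm (D w v - m))^2 \<partial>M) \<le> om * (norm v)^2"
    using D unfolding compressor_class_def m_def by auto
  have shift: "v - lam *\<^sub>R D w v = (v - lam *\<^sub>R m) + (- lam) *\<^sub>R (D w v - m)" for w
    by (simp add: algebra_simps)
  note decomp = bias_variance_decomposition[OF assms(1) int var_int m_def, of "v - lam *\<^sub>R m" "- lam"]
  show "integrable M (\<lambda>w. (norm (v - lam *\<^sub>R D w v))^2)"
    unfolding shift by (rule decomp(1))
  have "(norm (v - lam *\<^sub>R m))^2 \<le> ((1 - lam + lam * eta) * norm v)^2"
    using norm_relaxed_bias_le[OF bias assms(3,4)] by (intro power_mono) auto
  moreover have "lam^2 * (\<integral>w. (norm (D w v - m))^2 \<partial>M) \<le> lam^2 * (om * (norm v)^2)"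
    using var by (intro mult_left_mono) auto
  ultimately have "(\<integral>w. (norm (v - lam *\<^sub>R D w v))^2 \<partial>M)
      \<le> ((1 - lam + lam * eta) * norm v)^2 + lam^2 * (om * (norm v)^2)"
    unfolding shift decomp(2) power2_minus by (rule add_mono)
  also have "\<dots> = efbv_r lam eta om * (norm v)^2"
    unfolding efbv_r_def power_mult_distrib by (simp add: algebra_simps)
  finally show "(\<integral>w. (norm (v - lam *\<^sub>R D w v))^2 \<partial>M) \<le> efbv_r lam eta om * (norm v)^2" .
qed

lemma compressor_relaxed_average_second_moment:
  fixes D :: "nat \<Rightarrow> 'w \<Rightarrow> 'a::euclidean_space \<Rightarrow> 'a" and v :: "nat \<Rightarrow> 'a"
  assumes "prob_space M" and D: "\<And>i. i < n \<Longrightarrow> compressor_class M (D i) eta om"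
    and "0 \<le> lam" and "lam \<le> 1"
  shows "integrable M (\<lambda>w. (1 / real n) * (\<Sum>i<n. (norm (v i - lam *\<^sub>R D i w (v i)))^2))"
    and "(\<integral>w. (1 / real n) * (\<Sum>i<n. (norm (v i - lam *\<^sub>R D i w (v i)))^2) \<partial>M)
           \<le> efbv_r lam eta om * ((1 / real n) * (\<Sum>i<n. (norm (v i))^2))"
proof -
  note relaxed = compressor_relaxed_second_moment[OF assms(1) D assms(3,4)]
  show "integrable M (\<lambda>w. (1 / real n) * (\<Sum>i<n. (norm (v i - lam *\<^sub>R D i w (v i)))^2))"
    using relaxed by (intro integrable_mult_right Bochner_Integration.integrable_sum) auto
  have "(\<integral>w. (1 / real n) * (\<Sum>i<n. (norm (v i - lam *\<^sub>R D i w (v i)))^2) \<partial>M)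
      = (1 / real n) * (\<Sum>i<n. \<integral>w. (norm (v i - lam *\<^sub>R D i w (v i)))^2 \<partial>M)"
    using relaxed by (simp add: Bochner_Integration.integral_sum)
  also have "\<dots> \<le> (1 / real n) * (\<Sum>i<n. efbv_r lam eta om * (norm (v i))^2)"
    using relaxed by (intro mult_left_mono sum_mono) auto
  finally show "(\<integral>w. (1 / real n) * (\<Sum>i<n. (norm (v i - lam *\<^sub>R D i w (v i)))^2) \<partial>M)
      \<le> efbv_r lam eta om * ((1 / real n) * (\<Sum>i<n. (norm (v i))^2))"
    by (simp add: sum_distrib_left)
qed

lemma compressor_average_second_moment:
  fixes D :: "nat \<Rightarrow> 'w \<Rightarrow> 'a::euclidean_space \<Rightarrow> 'a" and v :: "nat \<Rightarrow> 'a"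
  assumes "prob_space M" and D: "\<And>i. i < n \<Longrightarrow> compressor_class M (D i) eta om"
    and average_variance: "(\<integral>w. (norm ((1 / real n) *\<^sub>R
             (\<Sum>i<n. D i w (v i) - (\<integral>w. D i w (v i) \<partial>M))))^2 \<partial>M)
           \<le> om_av / real n * (\<Sum>i<n. (norm (v i))^2)"
    and "0 \<le> nu" and "nu \<le> 1"
  shows "integrable M (\<lambda>w. (norm ((1 / real n) *\<^sub>R (\<Sum>i<n. nu *\<^sub>R D i w (v i) - v i)))^2)"
    and "(\<integral>w. (norm ((1 / real n) *\<^sub>R (\<Sum>i<n. nu *\<^sub>R D i w (v i) - v i)))^2 \<partial>M)
           \<le> efbv_r nu eta om_av * ((1 / real n) * (\<Sum>i<n. (norm (v i))^2))"
proof -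
  define m where "m i = (\<integral>w. D i w (v i) \<partial>M)" for i
  define B where "B w = (1 / real n) *\<^sub>R (\<Sum>i<n. D i w (v i))" for w
  define mB where "mB = (1 / real n) *\<^sub>R (\<Sum>i<n. m i)"
  define A where "A = (1 / real n) *\<^sub>R (\<Sum>i<n. nu *\<^sub>R m i - v i)"
  define G where "G = (1 / real n) * (\<Sum>i<n. (norm (v i))^2)"
  have int: "integrable M (\<lambda>w. D i w (v i))" and bias: "norm (m i - v i) \<le> eta * norm (v i)"
    and var_int: "integrable M (\<lambda>w. (norm (D i w (v i) - m i))^2)" if "i < n" for i
    using D[OF that] unfolding compressor_class_def m_def by auto
  have shift: "(1 / real n) *\<^sub>R (\<Sum>i<n. nu *\<^sub>R D i w (v i) - v i) = A + nu *\<^sub>R (B w - mB)" for w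
    unfolding A_def B_def mB_def by (simp add: sum_subtractf scaleR_sum_right algebra_simps)
  have centered: "B w - mB = (1 / real n) *\<^sub>R (\<Sum>i<n. D i w (v i) - m i)" for w
    unfolding B_def mB_def by (simp add: sum_subtractf algebra_simps)
  have B_int: "integrable M B"
    unfolding B_def using int by (intro integrable_scaleR_right Bochner_Integration.integrable_sum) auto
  have mB: "mB = (\<integral>w. B w \<partial>M)"
    unfolding B_def mB_def m_def using int by (simp add: Bochner_Integration.integral_sum)
  have B_var_int: "integrable M (\<lambda>w. (norm (B w - mB))^2)"
  proof (rule Bochner_Integration.integrable_bound)
    show "integrable M (\<lambda>w. (1 / real n) * (\<Sum>i<n. (norm (D i w (v i) - m i))^2))"
      using var_int by (intro integrable_mult_right Bochner_Integration.integrable_sum) auto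
    show "(\<lambda>w. (norm (B w - mB))^2) \<in> borel_measurable M"
      using B_int by measurable
    show "AE w in M. norm ((norm (B w - mB))^2)
        \<le> norm ((1 / real n) * (\<Sum>i<n. (norm (D i w (v i) - m i))^2))"
      unfolding centered using norm_average_power2_le by (auto intro!: AE_I2 simp: sum_nonneg)
  qed
  note decomp = bias_variance_decomposition[OF assms(1) B_int B_var_int mB, of A nu]
  show "integrable M (\<lambda>w. (norm ((1 / real n) *\<^sub>R (\<Sum>i<n. nu *\<^sub>R D i w (v i) - v i)))^2)"
    unfolding shift by (rule decomp(1))
  have "(norm A)^2 \<le> (1 / real n) * (\<Sum>i<n. (norm (nu *\<^sub>R m i - v i))^2)"
    unfolding A_def by (rule norm_average_power2_le)
  also have "\<dots> \<le> (1 / real n) * (\<Sum>i<n. ((1 - nu + nu * eta) * norm (v i))^2)"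
  proof (intro mult_left_mono sum_mono)
    fix i assume "i \<in> {..<n}"
    then have "norm (nu *\<^sub>R m i - v i) \<le> (1 - nu + nu * eta) * norm (v i)"
      using norm_relaxed_bias_le[OF bias assms(4,5)] by (simp add: norm_minus_commute)
    then show "(norm (nu *\<^sub>R m i - v i))^2 \<le> ((1 - nu + nu * eta) * norm (v i))^2"
      by (intro power_mono) auto
  qed simp
  finally have "(norm A)^2 \<le> (1 - nu + nu * eta)^2 * G"
    unfolding G_def power_mult_distrib by (simp add: sum_distrib_left)
  moreover have "nu^2 * (\<integral>w. (norm (B w - mB))^2 \<partial>M) \<le> nu^2 * (om_av * G)"
    using average_variance unfolding centered G_def m_def by (intro mult_left_mono) auto
  ultimately have "(\<integral>w. (norm ((1 / real n) *\<^sub>R (\<Sum>i<n. nu *\<^sub>R D i w (v i) - v i)))^2 \<partial>M)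
      \<le> (1 - nu + nu * eta)^2 * G + nu^2 * (om_av * G)"
    unfolding shift decomp(2) by (rule add_mono)
  also have "\<dots> = efbv_r nu eta om_av * G"
    unfolding efbv_r_def by (simp add: algebra_simps)
  finally show "(\<integral>w. (norm ((1 / real n) *\<^sub>R (\<Sum>i<n. nu *\<^sub>R D i w (v i) - v i)))^2 \<partial>M)
      \<le> efbv_r nu eta om_av * ((1 / real n) * (\<Sum>i<n. (norm (v i))^2))"
    unfolding G_def .
qed

section \<open>The constants \<open>s_star\<close> and \<open>theta_star\<close>\<close>

lemma s_star_pos:
  assumes "0 < r" and "r < 1"
  shows "0 < s_star r"
proof -
  have "1 < (1 + r) / (2 * r)" using assms by (simp add: field_simps)
  then have "1 < sqrt ((1 + r) / (2 * r))" by (metis real_sqrt_one real_sqrt_less_iff)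
  then show ?thesis unfolding s_star_def by simp
qed

lemma one_plus_s_star_power2:
  assumes "0 < r"
  shows "(1 + s_star r)^2 = (1 + r) / (2 * r)"
  using assms unfolding s_star_def by simp

lemma theta_star_pos:
  assumes "0 < r" and "r < 1" and "0 < rav"
  shows "0 < theta_star r rav"
  using s_star_pos[OF assms(1,2)] assms unfolding theta_star_def by simp

lemma theta_star_young_weight:
  assumes "0 < r" and "r < 1" and "0 < rav"
  shows "(1 + 1 / s_star r) / theta_star r rav = (sqrt (rav / r) / s_star r)^2"
proof -
  define s where "s = s_star r"
  have s: "0 < s" unfolding s_def using s_star_pos assms by blast
  define k where "k = 1 + s"
  have k: "0 < k" unfolding k_def using s by simp
  have "(1 + 1 / s) / theta_star r rav = (k / s) / (s * k * r / rav)"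
    using s unfolding theta_star_def s_def[symmetric] k_def by (simp add: field_simps)
  also have "\<dots> = rav / r / s^2"
    using s k assms by (simp add: field_simps power2_eq_square)
  finally show ?thesis
    using assms unfolding s_def by (simp add: power_divide)
qed

lemma theta_star_balance:
  assumes "0 < r" and "r < 1" and "0 < rav"
  shows "gamma / 2 * rav + gamma / (2 * theta_star r rav) * (1 + s_star r) * r
       = (r + 1) / 2 * (gamma / (2 * theta_star r rav))"
proof -
  define s where "s = s_star r"
  define c where "c = gamma / (2 * theta_star r rav)"
  have "s * (1 + s) * r = theta_star r rav * rav"
    using assms unfolding theta_star_def s_def by simp
  then have "gamma / 2 * rav = c * (s * (1 + s) * r)"
    using theta_star_pos[OF assms] unfolding c_def by simp
  then have "gamma / 2 * rav + c * (1 + s) * r = c * ((1 + s)^2 * r)"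
    by (simp add: algebra_simps power2_eq_square)
  also have "\<dots> = (r + 1) / 2 * c"
    unfolding s_def one_plus_s_star_power2[OF assms(1)] using assms by (simp add: field_simps)
  finally show ?thesis unfolding s_def c_def .
qed

lemma step_size_quadratic_le:
  fixes L a gamma :: real
  assumes "0 \<le> L" and "0 \<le> a" and "0 < gamma" and "gamma \<le> 1 / (L + a)"
  shows "L * gamma + a^2 * gamma^2 \<le> 1"
proof -
  have "0 < L + a"
    using assms by (cases "L + a = 0") auto
  then have "L * gamma + a * gamma \<le> 1"
    using assms(4) by (simp add: field_simps)
  moreover have "(a * gamma)^2 \<le> a * gamma"
  proof -
    have "a * gamma \<le> 1" using calculation assms mult_nonneg_nonneg[of L gamma] by linarith
    then show ?thesis using assms by (simp add: power2_eq_square mult_left_le)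
  qed
  ultimately show ?thesis by (simp add: power_mult_distrib)
qed

section \<open>EF-BV iterates\<close>

definition efbv_step :: "nat \<Rightarrow> real \<Rightarrow> real \<Rightarrow> real \<Rightarrow> (nat \<Rightarrow> 'a \<Rightarrow> 'a::real_vector)
    \<Rightarrow> (nat \<Rightarrow> 'a \<Rightarrow> 'a) \<Rightarrow> 'a \<times> (nat \<Rightarrow> 'a) \<times> 'a \<Rightarrow> 'a \<times> (nat \<Rightarrow> 'a) \<times> 'a" where
  "efbv_step n gamma lam nu grad D st =
     (let x = fst st; h = fst (snd st); hb = snd (snd st);
          d = (\<lambda>i. D i (grad i x - h i));
          db = (1 / real n) *\<^sub>R (\<Sum>i<n. d i)
      in (x - gamma *\<^sub>R (hb + nu *\<^sub>R db), (\<lambda>i. h i + lam *\<^sub>R d i), hb + lam *\<^sub>R db))"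

lemma efbv_Suc_step:
  "efbv n gamma lam nu grad Cr x0 h0 (Suc t) =
     efbv_step n gamma lam nu grad (Cr t) (efbv n gamma lam nu grad Cr x0 h0 t)"
  by (cases "efbv n gamma lam nu grad Cr x0 h0 t") (simp add: efbv_step_def)

lemma efbv_prefix_cong:
  "(\<And>s. s < t \<Longrightarrow> Cr s = Cr' s) \<Longrightarrow>
     efbv n gamma lam nu grad Cr x0 h0 t = efbv n gamma lam nu grad Cr' x0 h0 t"
  by (induction t) (simp_all add: efbv_Suc_step)

lemma efbv_average_invariant:
  "snd (snd (efbv n gamma lam nu grad Cr x0 h0 t))
     = (1 / real n) *\<^sub>R (\<Sum>i<n. fst (snd (efbv n gamma lam nu grad Cr x0 h0 t)) i)"
proof (induction t)
  case (Suc t)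
  then show ?case
    unfolding efbv_Suc_step
    by (simp add: efbv_step_def Let_def sum.distrib scaleR_add_right scaleR_sum_right)
qed simp

lemma efbv_lyap_fst_snd:
  "efbv_lyap n fs grad gamma theta xstar st =
     (1 / real n) * (\<Sum>i<n. fs i (fst st)) - (1 / real n) * (\<Sum>i<n. fs i xstar)
     + gamma / (2 * theta) * ((1 / real n) * (\<Sum>i<n. (norm (grad i (fst st) - fst (snd st) i))^2))"
  by (cases st) (simp add: efbv_lyap_def)

text \<open>No sigma-algebra is put on the state type, whose middle component is a function
  \<open>nat \<Rightarrow> 'a\<close>: a random state counts as measurable when \<open>x\<close>, \<open>hb\<close> and \<open>h i\<close> for \<open>i < n\<close> are.\<close>
definition efbv_state_measurable ::
    "nat \<Rightarrow> 'm measure \<Rightarrow> ('m \<Rightarrow> 'a::euclidean_space \<times> (nat \<Rightarrow> 'a) \<times> 'a) \<Rightarrow> bool" where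
  "efbv_state_measurable n \<Omega> S \<longleftrightarrow>
     (\<lambda>w. fst (S w)) \<in> borel_measurable \<Omega> \<and>
     (\<forall>i<n. (\<lambda>w. fst (snd (S w)) i) \<in> borel_measurable \<Omega>) \<and>
     (\<lambda>w. snd (snd (S w))) \<in> borel_measurable \<Omega>"

lemma efbv_state_measurable_const: "efbv_state_measurable n \<Omega> (\<lambda>w. st)"
  unfolding efbv_state_measurable_def by simp

lemma efbv_state_measurable_step:
  fixes C :: "nat \<Rightarrow> 'a::euclidean_space \<Rightarrow> 'b \<Rightarrow> 'a"
  assumes S: "efbv_state_measurable n \<Omega> S" and Y: "Y \<in> \<Omega> \<rightarrow>\<^sub>M N"
    and C: "\<And>i. (\<lambda>(x, b). C i x b) \<in> borel \<Otimes>\<^sub>M N \<rightarrow>\<^sub>M borel"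
    and grad: "\<And>i. i < n \<Longrightarrow> grad i \<in> borel_measurable borel"
  shows "efbv_state_measurable n \<Omega> (\<lambda>w. efbv_step n gamma lam nu grad (\<lambda>i v. C i v (Y w)) (S w))"
proof -
  have x: "(\<lambda>w. fst (S w)) \<in> borel_measurable \<Omega>"
    and h: "\<And>i. i < n \<Longrightarrow> (\<lambda>w. fst (snd (S w)) i) \<in> borel_measurable \<Omega>"
    and hb: "(\<lambda>w. snd (snd (S w))) \<in> borel_measurable \<Omega>"
    using S unfolding efbv_state_measurable_def by auto
  have d: "(\<lambda>w. C i (grad i (fst (S w)) - fst (snd (S w)) i) (Y w)) \<in> borel_measurable \<Omega>"
    if "i < n" for i
  proof -
    have "(\<lambda>w. (grad i (fst (S w)) - fst (snd (S w)) i, Y w)) \<in> \<Omega> \<rightarrow>\<^sub>M borel \<Otimes>\<^sub>M N"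
      by (intro measurable_Pair borel_measurable_diff measurable_compose[OF x grad] h Y that)
    from measurable_compose[OF this C[of i]] show ?thesis by simp
  qed
  have "(\<lambda>w. \<Sum>i<n. C i (grad i (fst (S w)) - fst (snd (S w)) i) (Y w)) \<in> borel_measurable \<Omega>"
    using d by (intro borel_measurable_sum) auto
  then show ?thesis
    unfolding efbv_state_measurable_def efbv_step_def Let_def using x h hb d
    by (auto intro!: borel_measurable_add borel_measurable_diff borel_measurable_scaleR)
qed

lemma efbv_lyap_measurable:
  assumes S: "efbv_state_measurable n \<Omega> S"
    and fs: "\<And>i. i < n \<Longrightarrow> fs i \<in> borel_measurable borel"
    and grad: "\<And>i. i < n \<Longrightarrow> grad i \<in> borel_measurable borel"
  shows "(\<lambda>w. efbv_lyap n fs grad gamma theta xstar (S w)) \<in> borel_measurable \<Omega>"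
proof -
  have x: "(\<lambda>w. fst (S w)) \<in> borel_measurable \<Omega>"
    and h: "\<And>i. i < n \<Longrightarrow> (\<lambda>w. fst (snd (S w)) i) \<in> borel_measurable \<Omega>"
    using S unfolding efbv_state_measurable_def by auto
  have "(\<lambda>w. \<Sum>i<n. fs i (fst (S w))) \<in> borel_measurable \<Omega>"
    using measurable_compose[OF x fs] by (intro borel_measurable_sum) auto
  moreover have "(\<lambda>w. (norm (grad i (fst (S w)) - fst (snd (S w)) i))^2) \<in> borel_measurable \<Omega>"
    if "i < n" for i
    using measurable_compose[OF x grad[OF that]] h[OF that] by measurable
  then have "(\<lambda>w. \<Sum>i<n. (norm (grad i (fst (S w)) - fst (snd (S w)) i))^2) \<in> borel_measurable \<Omega>"
    by (intro borel_measurable_sum) auto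
  ultimately show ?thesis unfolding efbv_lyap_fst_snd by measurable
qed

section \<open>Iterating a contraction over independent seeds\<close>

lemma (in prob_space) indep_var_past_present:
  fixes xi :: "nat \<Rightarrow> 'a \<Rightarrow> 'b"
  assumes "indep_vars (\<lambda>_. N) xi UNIV"
  shows "indep_var (PiM {..<t} (\<lambda>_. N)) (\<lambda>w. restrict (\<lambda>i. xi i w) {..<t})
                   (PiM {t} (\<lambda>_. N)) (\<lambda>w. restrict (\<lambda>i. xi i w) {t})"
proof -
  have "indep_vars (\<lambda>j. PiM (case_bool {..<t} {t} j) (\<lambda>_. N))
      (\<lambda>j w. restrict (\<lambda>i. xi i w) (case_bool {..<t} {t} j)) UNIV"
    by (rule indep_vars_restrict[OF assms]) (auto simp: disjoint_family_on_def split: bool.split)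
  moreover have "(\<lambda>j. PiM (case_bool {..<t} {t} j) (\<lambda>_. N))
      = case_bool (PiM {..<t} (\<lambda>_. N)) (PiM {t} (\<lambda>_. N))"
    and "(\<lambda>j w. restrict (\<lambda>i. xi i w) (case_bool {..<t} {t} j))
      = case_bool (\<lambda>w. restrict (\<lambda>i. xi i w) {..<t}) (\<lambda>w. restrict (\<lambda>i. xi i w) {t})"
    by (auto split: bool.split)
  ultimately show ?thesis
    unfolding indep_var_def by simp
qed

lemma (in prob_space) nn_integral_independent_step_le:
  fixes xi :: "nat \<Rightarrow> 'a \<Rightarrow> 'b" and G :: "(nat \<Rightarrow> 'b) \<Rightarrow> 'c" and step :: "'c \<Rightarrow> 'b \<Rightarrow> 'c"
    and \<Phi> :: "'c \<Rightarrow> ennreal"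
  assumes xi_meas: "\<And>t. xi t \<in> M \<rightarrow>\<^sub>M N" and xi_indep: "indep_vars (\<lambda>_. N) xi UNIV"
    and G_prefix: "\<And>ys ys'. (\<And>s. s < t \<Longrightarrow> ys s = ys' s) \<Longrightarrow> G ys = G ys'"
    and \<Phi>_G_meas: "(\<lambda>ys. \<Phi> (G ys)) \<in> borel_measurable (PiM {..<t} (\<lambda>_. N))"
    and \<Phi>_step_meas: "(\<lambda>(ys, b). \<Phi> (step (G ys) b)) \<in> borel_measurable (PiM {..<t} (\<lambda>_. N) \<Otimes>\<^sub>M N)"
    and contraction: "\<And>ys. (\<integral>\<^sup>+w. \<Phi> (step (G ys) (xi t w)) \<partial>M) \<le> \<rho> * \<Phi> (G ys)"
  shows "(\<integral>\<^sup>+w. \<Phi> (step (G (\<lambda>s. xi s w)) (xi t w)) \<partial>M) \<le> \<rho> * (\<integral>\<^sup>+w. \<Phi> (G (\<lambda>s. xi s w)) \<partial>M)"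
proof -
  let ?past = "PiM {..<t} (\<lambda>_. N)" and ?now = "PiM {t} (\<lambda>_. N)"
  define X where "X w = restrict (\<lambda>i. xi i w) {..<t}" for w
  define Y where "Y w = restrict (\<lambda>i. xi i w) {t}" for w
  define f where "f p = \<Phi> (step (G (fst p)) (snd p t))" for p :: "(nat \<Rightarrow> 'b) \<times> (nat \<Rightarrow> 'b)"
  have G_X: "G (X w) = G (\<lambda>s. xi s w)" for w
    unfolding X_def by (rule G_prefix) simp
  have X_meas: "X \<in> M \<rightarrow>\<^sub>M ?past" and Y_meas: "Y \<in> M \<rightarrow>\<^sub>M ?now"
    unfolding X_def Y_def by (auto intro!: measurable_restrict xi_meas)
  have joint: "distr M (?past \<Otimes>\<^sub>M ?now) (\<lambda>w. (X w, Y w)) = distr M ?past X \<Otimes>\<^sub>M distr M ?now Y"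
    using indep_var_past_present[OF xi_indep] unfolding indep_var_distribution_eq X_def Y_def by simp
  interpret Y: prob_space "distr M ?now Y" by (rule prob_space_distr[OF Y_meas])
  have f_meas: "f \<in> borel_measurable (?past \<Otimes>\<^sub>M ?now)"
  proof -
    have "(\<lambda>p. (fst p, snd p t)) \<in> ?past \<Otimes>\<^sub>M ?now \<rightarrow>\<^sub>M ?past \<Otimes>\<^sub>M N"
      by (intro measurable_Pair measurable_fst measurable_compose[OF measurable_snd]
          measurable_component_singleton) simp
    from measurable_compose[OF this \<Phi>_step_meas] show ?thesis unfolding f_def by simp
  qed
  have inner: "(\<integral>\<^sup>+z. f (y, z) \<partial>distr M ?now Y) \<le> \<rho> * \<Phi> (G y)" if "y \<in> space ?past" for y
  proof -
    have "(\<lambda>z. f (y, z)) \<in> borel_measurable ?now"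
      using measurable_compose[OF measurable_Pair1'[OF that] f_meas] by simp
    then have "(\<integral>\<^sup>+z. f (y, z) \<partial>distr M ?now Y) = (\<integral>\<^sup>+w. \<Phi> (step (G y) (xi t w)) \<partial>M)"
      by (subst nn_integral_distr[OF Y_meas]) (simp_all add: f_def Y_def)
    with contraction show ?thesis by simp
  qed
  have "(\<integral>\<^sup>+w. \<Phi> (step (G (\<lambda>s. xi s w)) (xi t w)) \<partial>M) = (\<integral>\<^sup>+w. f (X w, Y w) \<partial>M)"
    unfolding f_def G_X[symmetric] by (simp add: Y_def)
  also have "\<dots> = (\<integral>\<^sup>+p. f p \<partial>(distr M ?past X \<Otimes>\<^sub>M distr M ?now Y))"
    unfolding joint[symmetric] using X_meas Y_meas f_meas by (intro nn_integral_distr[symmetric]) auto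
  also have "\<dots> = (\<integral>\<^sup>+y. \<integral>\<^sup>+z. f (y, z) \<partial>distr M ?now Y \<partial>distr M ?past X)"
    using f_meas by (intro Y.nn_integral_fst[symmetric]) (simp add: measurable_cong_sets[OF sets_pair_measure_cong[OF sets_distr sets_distr] refl])
  also have "\<dots> \<le> (\<integral>\<^sup>+y. \<rho> * \<Phi> (G y) \<partial>distr M ?past X)"
    by (rule nn_integral_mono) (use inner in simp)
  also have "\<dots> = \<rho> * (\<integral>\<^sup>+y. \<Phi> (G y) \<partial>distr M ?past X)"
    using \<Phi>_G_meas by (intro nn_integral_cmult) simp
  also have "(\<integral>\<^sup>+y. \<Phi> (G y) \<partial>distr M ?past X) = (\<integral>\<^sup>+w. \<Phi> (G (\<lambda>s. xi s w)) \<partial>M)"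
    using \<Phi>_G_meas by (subst nn_integral_distr[OF X_meas]) (simp_all add: G_X)
  finally show ?thesis .
qed

lemma (in prob_space) nn_integral_independent_iteration_le:
  fixes xi :: "nat \<Rightarrow> 'a \<Rightarrow> 'b" and G :: "nat \<Rightarrow> (nat \<Rightarrow> 'b) \<Rightarrow> 'c"
    and step :: "nat \<Rightarrow> 'c \<Rightarrow> 'b \<Rightarrow> 'c" and \<Phi> :: "'c \<Rightarrow> ennreal"
  assumes xi_meas: "\<And>t. xi t \<in> M \<rightarrow>\<^sub>M N" and xi_indep: "indep_vars (\<lambda>_. N) xi UNIV"
    and G_Suc: "\<And>t ys. G (Suc t) ys = step t (G t ys) (ys t)"
    and G_prefix: "\<And>t ys ys'. (\<And>s. s < t \<Longrightarrow> ys s = ys' s) \<Longrightarrow> G t ys = G t ys'"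
    and \<Phi>_G_meas: "\<And>t. (\<lambda>ys. \<Phi> (G t ys)) \<in> borel_measurable (PiM {..<t} (\<lambda>_. N))"
    and \<Phi>_step_meas: "\<And>t. (\<lambda>(ys, b). \<Phi> (step t (G t ys) b))
                          \<in> borel_measurable (PiM {..<t} (\<lambda>_. N) \<Otimes>\<^sub>M N)"
    and contraction: "\<And>t ys. (\<integral>\<^sup>+w. \<Phi> (step t (G t ys) (xi t w)) \<partial>M) \<le> \<rho> * \<Phi> (G t ys)"
  shows "(\<integral>\<^sup>+w. \<Phi> (G t (\<lambda>s. xi s w)) \<partial>M) \<le> \<rho> ^ t * \<Phi> (G 0 ys)"
proof (induction t)
  case 0
  have "G 0 (\<lambda>s. xi s w) = G 0 ys" for w by (rule G_prefix) simp
  then show ?case by (simp add: emeasure_space_1)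
next
  case (Suc t)
  have "(\<integral>\<^sup>+w. \<Phi> (G (Suc t) (\<lambda>s. xi s w)) \<partial>M) \<le> \<rho> * (\<integral>\<^sup>+w. \<Phi> (G t (\<lambda>s. xi s w)) \<partial>M)"
    unfolding G_Suc
    by (rule nn_integral_independent_step_le[OF xi_meas xi_indep G_prefix \<Phi>_G_meas \<Phi>_step_meas contraction])
  also have "\<dots> \<le> \<rho> * (\<rho> ^ t * \<Phi> (G 0 ys))"
    by (rule mult_left_mono[OF Suc]) simp
  finally show ?case by (simp add: mult.assoc)
qed

section \<open>One step of EF-BV under the PL condition\<close>

text \<open>The averaged objective, its gradient and the constants \<open>Lt\<close>, \<open>r\<close>, \<open>rav\<close> are
  parameters fixed by defining equations, mirroring the local definitions of the main theorem.\<close>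
locale efbv_pl =
  fixes n :: nat and fs :: "nat \<Rightarrow> 'a::euclidean_space \<Rightarrow> real" and grad :: "nat \<Rightarrow> 'a \<Rightarrow> 'a"
    and Ls :: "nat \<Rightarrow> real" and L mu :: real and xstar :: 'a
    and eta om om_av gamma lam nu :: real
    and F :: "'a \<Rightarrow> real" and gradF :: "'a \<Rightarrow> 'a" and Lt r rav :: real
  assumes F_eq: "F = (\<lambda>x. (1 / real n) * (\<Sum>i<n. fs i x))"
    and gradF_eq: "gradF = (\<lambda>x. (1 / real n) *\<^sub>R (\<Sum>i<n. grad i x))"
    and Lt_eq: "Lt = sqrt ((1 / real n) * (\<Sum>i<n. (Ls i)^2))"
    and r_eq: "r = efbv_r lam eta om"
    and rav_eq: "rav = efbv_r nu eta om_av"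
    and deriv: "\<And>i x. i < n \<Longrightarrow> (fs i has_derivative (\<lambda>v. grad i x \<bullet> v)) (at x)"
    and smooth_i: "\<And>i x y. i < n \<Longrightarrow> norm (grad i x - grad i y) \<le> Ls i * norm (x - y)"
    and smooth_f: "\<And>x y. norm (gradF x - gradF y) \<le> L * norm (x - y)"
    and xstar_min: "\<And>x. F xstar \<le> F x"
    and PL: "\<And>x. (norm (gradF x))^2 \<ge> 2 * mu * (F x - F xstar)"
    and r_pos: "r > 0" and rav_pos: "rav > 0" and r_lt1: "r < 1"
    and nu_range: "0 < nu" "nu \<le> 1"
    and lam_range: "0 < lam" "lam \<le> 1"
    and gamma_pos: "0 < gamma"
    and gamma_le: "gamma \<le> 1 / (L + Lt * sqrt (rav / r) * (1 / s_star r))"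
begin

lemma L_nonneg: "0 \<le> L"
proof -
  obtain b :: 'a where b: "b \<in> Basis" using nonempty_Basis by blast
  have "0 \<le> norm (gradF b - gradF 0)" by simp
  also have "\<dots> \<le> L * norm (b - 0)" by (rule smooth_f)
  finally show ?thesis using b by simp
qed

lemma Lt_power2: "Lt^2 = (1 / real n) * (\<Sum>i<n. (Ls i)^2)"
  unfolding Lt_eq by (intro real_sqrt_pow2 mult_nonneg_nonneg sum_nonneg) auto

lemma F_has_derivative: "(F has_derivative (\<lambda>v. gradF x \<bullet> v)) (at x)"
proof -
  have "((\<lambda>y. \<Sum>i<n. fs i y) has_derivative (\<lambda>v. \<Sum>i<n. grad i x \<bullet> v)) (at x)"
    using deriv by (intro has_derivative_sum) auto
  then have "(F has_derivative (\<lambda>v. (1 / real n) * (\<Sum>i<n. grad i x \<bullet> v))) (at x)"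
    unfolding F_eq by (rule has_derivative_mult_right)
  then show ?thesis
    unfolding gradF_eq by (rule has_derivative_eq_rhs) (simp add: fun_eq_iff inner_sum_left)
qed

lemma F_descent: "F y \<le> F x + gradF x \<bullet> (y - x) + L / 2 * (norm (y - x))^2"
  by (rule quadratic_upper_bound_of_lipschitz_gradient[OF F_has_derivative smooth_f])

lemma grad_measurable: "i < n \<Longrightarrow> grad i \<in> borel_measurable borel"
proof -
  assume i: "i < n"
  have "(Ls i)-lipschitz_on UNIV (grad i)"
  proof (intro lipschitz_onI)
    obtain b :: 'a where b: "b \<in> Basis" using nonempty_Basis by blast
    have "0 \<le> norm (grad i b - grad i 0)" by simp
    also have "\<dots> \<le> Ls i * norm (b - 0)" by (rule smooth_i[OF i])
    finally show "0 \<le> Ls i" using b by simp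
  qed (use smooth_i[OF i] in \<open>auto simp: dist_norm\<close>)
  then show ?thesis
    by (intro borel_measurable_continuous_onI lipschitz_on_continuous_on)
qed

lemma fs_measurable: "i < n \<Longrightarrow> fs i \<in> borel_measurable borel"
  by (intro borel_measurable_continuous_onI continuous_at_imp_continuous_on ballI
      has_derivative_continuous[OF deriv])

lemma grad_average_shift_le:
  assumes "0 < s"
  shows "(1 / real n) * (\<Sum>i<n. (norm (grad i y - grad i x + w i))^2)
    \<le> (1 + 1 / s) * Lt^2 * (norm (y - x))^2 + (1 + s) * ((1 / real n) * (\<Sum>i<n. (norm (w i))^2))"
proof -
  have "(norm (grad i y - grad i x + w i))^2
      \<le> (1 + 1 / s) * ((Ls i)^2 * (norm (y - x))^2) + (1 + s) * (norm (w i))^2" if "i < n" for i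
  proof -
    have "(norm (grad i y - grad i x))^2 \<le> (Ls i * norm (y - x))^2"
      using smooth_i[OF that] by (intro power_mono) auto
    then have "(1 + 1 / s) * (norm (grad i y - grad i x))^2 \<le> (1 + 1 / s) * ((Ls i)^2 * (norm (y - x))^2)"
      using assms by (intro mult_left_mono) (auto simp: power_mult_distrib)
    then show ?thesis
      using norm_add_power2_le[OF assms, of "grad i y - grad i x" "w i"] by linarith
  qed
  then have "(\<Sum>i<n. (norm (grad i y - grad i x + w i))^2)
      \<le> (\<Sum>i<n. (1 + 1 / s) * ((Ls i)^2 * (norm (y - x))^2) + (1 + s) * (norm (w i))^2)"
    by (intro sum_mono) auto
  also have "\<dots> = (1 + 1 / s) * (norm (y - x))^2 * (\<Sum>i<n. (Ls i)^2) + (1 + s) * (\<Sum>i<n. (norm (w i))^2)"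
    by (simp add: sum.distrib sum_distrib_left sum_distrib_right mult_ac)
  finally have "(1 / real n) * (\<Sum>i<n. (norm (grad i y - grad i x + w i))^2)
      \<le> (1 / real n) * ((1 + 1 / s) * (norm (y - x))^2 * (\<Sum>i<n. (Ls i)^2)
                         + (1 + s) * (\<Sum>i<n. (norm (w i))^2))"
    by (rule mult_left_mono) simp
  then show ?thesis
    unfolding Lt_power2 by (simp only: ring_distribs mult_ac)
qed

lemma step_size_condition:
  "L * gamma + (1 + 1 / s_star r) * Lt^2 / theta_star r rav * gamma^2 \<le> 1"
proof -
  define a where "a = Lt * sqrt (rav / r) * (1 / s_star r)"
  have "0 \<le> Lt" unfolding Lt_eq by (intro real_sqrt_ge_zero mult_nonneg_nonneg sum_nonneg) auto
  then have "0 \<le> a"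
    unfolding a_def using r_pos rav_pos s_star_pos[OF r_pos r_lt1] by simp
  then have "L * gamma + a^2 * gamma^2 \<le> 1"
    using L_nonneg gamma_pos gamma_le unfolding a_def by (intro step_size_quadratic_le)
  moreover have "(1 + 1 / s_star r) * Lt^2 / theta_star r rav = a^2"
  proof -
    have "(1 + 1 / s_star r) * Lt^2 / theta_star r rav = Lt^2 * ((1 + 1 / s_star r) / theta_star r rav)"
      by simp
    also have "\<dots> = a^2"
      unfolding theta_star_young_weight[OF r_pos r_lt1 rav_pos] a_def
      by (simp add: power_mult_distrib power_divide)
    finally show ?thesis .
  qed
  ultimately show ?thesis by simp
qed

lemma efbv_lyap_nonneg: "0 \<le> efbv_lyap n fs grad gamma (theta_star r rav) xstar st"
proof -
  have "0 \<le> (1 / real n) * (\<Sum>i<n. fs i (fst st)) - (1 / real n) * (\<Sum>i<n. fs i xstar)"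
    using xstar_min[of "fst st"] unfolding F_eq by simp
  moreover have "0 \<le> gamma / (2 * theta_star r rav)
      * ((1 / real n) * (\<Sum>i<n. (norm (grad i (fst st) - fst (snd st) i))^2))"
    using gamma_pos theta_star_pos[OF r_pos r_lt1 rav_pos] by (simp add: sum_nonneg)
  ultimately show ?thesis
    unfolding efbv_lyap_fst_snd by linarith
qed

lemma efbv_lyap_step_le:
  fixes x :: 'a and h :: "nat \<Rightarrow> 'a" and D :: "nat \<Rightarrow> 'a \<Rightarrow> 'a"
  defines "v \<equiv> \<lambda>i. grad i x - h i"
  shows "efbv_lyap n fs grad gamma (theta_star r rav) xstar
           (efbv_step n gamma lam nu grad D (x, h, (1 / real n) *\<^sub>R (\<Sum>i<n. h i)))
         \<le> F x - F xstar - gamma / 2 * (norm (gradF x))^2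
           + gamma / 2 * (norm ((1 / real n) *\<^sub>R (\<Sum>i<n. nu *\<^sub>R D i (v i) - v i)))^2
           + gamma / (2 * theta_star r rav) * (1 + s_star r)
               * ((1 / real n) * (\<Sum>i<n. (norm (v i - lam *\<^sub>R D i (v i)))^2))"
proof -
  define s where "s = s_star r"
  define \<theta> where "\<theta> = theta_star r rav"
  define c where "c = gamma / (2 * \<theta>)"
  define g where "g = (1 / real n) *\<^sub>R (\<Sum>i<n. h i) + nu *\<^sub>R ((1 / real n) *\<^sub>R (\<Sum>i<n. D i (v i)))"
  define e where "e = (1 / real n) *\<^sub>R (\<Sum>i<n. nu *\<^sub>R D i (v i) - v i)"
  define S where "S = (1 / real n) * (\<Sum>i<n. (norm (v i - lam *\<^sub>R D i (v i)))^2)"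
  define N where "N = gamma^2 * (norm g)^2"
  have s: "0 < s" unfolding s_def using s_star_pos[OF r_pos r_lt1] .
  have \<theta>: "0 < \<theta>" unfolding \<theta>_def using theta_star_pos[OF r_pos r_lt1 rav_pos] .
  have c: "0 < c" unfolding c_def using gamma_pos \<theta> by simp
  have "g - gradF x = e"
    unfolding g_def e_def gradF_eq v_def
    by (simp add: sum_subtractf scaleR_sum_right scaleR_diff_right sum.distrib algebra_simps)
  then have polar: "gamma * (gradF x \<bullet> g) = gamma / 2 * (norm g)^2 + gamma / 2 * (norm (gradF x))^2 - gamma / 2 * (norm e)^2"
    by (auto simp: power2_norm_eq_inner inner_diff_left inner_diff_right inner_commute algebra_simps)
  have lyap: "efbv_lyap n fs grad gamma \<theta> xstar (efbv_step n gamma lam nu grad D (x, h, (1 / real n) *\<^sub>R (\<Sum>i<n. h i)))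
      = F (x - gamma *\<^sub>R g) - F xstar
        + c * ((1 / real n) * (\<Sum>i<n. (norm (grad i (x - gamma *\<^sub>R g) - grad i x + (v i - lam *\<^sub>R D i (v i))))^2))"
    unfolding efbv_lyap_def efbv_step_def F_eq c_def g_def v_def
    by (simp add: Let_def algebra_simps sum.distrib scaleR_sum_right)
  have shift: "(1 / real n) * (\<Sum>i<n. (norm (grad i (x - gamma *\<^sub>R g) - grad i x + (v i - lam *\<^sub>R D i (v i))))^2)
      \<le> (1 + 1 / s) * Lt^2 * N + (1 + s) * S"
    using grad_average_shift_le[OF s, of "x - gamma *\<^sub>R g" x] gamma_pos
    unfolding S_def N_def by (simp add: power_mult_distrib)
  have young: "c * ((1 / real n) * (\<Sum>i<n. (norm (grad i (x - gamma *\<^sub>R g) - grad i x + (v i - lam *\<^sub>R D i (v i))))^2))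
      \<le> c * (1 + 1 / s) * Lt^2 * N + c * (1 + s) * S"
  proof -
    from shift c have "c * ((1 / real n) * (\<Sum>i<n. (norm (grad i (x - gamma *\<^sub>R g) - grad i x + (v i - lam *\<^sub>R D i (v i))))^2))
        \<le> c * ((1 + 1 / s) * Lt^2 * N + (1 + s) * S)"
      by (intro mult_left_mono) auto
    then show ?thesis by (simp add: algebra_simps)
  qed
  have descent: "F (x - gamma *\<^sub>R g) \<le> F x - gamma * (gradF x \<bullet> g) + L / 2 * N"
    using F_descent[of "x - gamma *\<^sub>R g" x] gamma_pos unfolding N_def by (simp add: power_mult_distrib)
  have "gamma / 2 * (norm g)^2 * (L * gamma + (1 + 1 / s) * Lt^2 / \<theta> * gamma^2) \<le> gamma / 2 * (norm g)^2"
    using step_size_condition gamma_pos unfolding s_def \<theta>_def by (simp add: mult_left_le)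
  then have step_size: "L / 2 * N + c * (1 + 1 / s) * Lt^2 * N \<le> gamma / 2 * (norm g)^2"
    unfolding N_def c_def using \<theta> by (simp add: field_simps power2_eq_square)
  show ?thesis
    using lyap young descent polar step_size
    unfolding e_def[symmetric] S_def[symmetric] c_def \<theta>_def s_def by linarith
qed

lemma efbv_step_bound_expectation:
  fixes x :: 'a and h :: "nat \<Rightarrow> 'a" and D :: "nat \<Rightarrow> 'w \<Rightarrow> 'a \<Rightarrow> 'a"
  defines "v \<equiv> \<lambda>i. grad i x - h i"
  defines "Q \<equiv> \<lambda>w. F x - F xstar - gamma / 2 * (norm (gradF x))^2
           + gamma / 2 * (norm ((1 / real n) *\<^sub>R (\<Sum>i<n. nu *\<^sub>R D i w (v i) - v i)))^2
           + gamma / (2 * theta_star r rav) * (1 + s_star r)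
               * ((1 / real n) * (\<Sum>i<n. (norm (v i - lam *\<^sub>R D i w (v i)))^2))"
  assumes "prob_space M" and compressors: "\<And>i. i < n \<Longrightarrow> compressor_class M (D i) eta om"
    and average_variance: "\<And>v. (\<integral>w. (norm ((1 / real n) *\<^sub>R
             (\<Sum>i<n. D i w (v i) - (\<integral>w. D i w (v i) \<partial>M))))^2 \<partial>M)
           \<le> om_av / real n * (\<Sum>i<n. (norm (v i))^2)"
  shows "integrable M Q"
    and "(\<integral>w. Q w \<partial>M) \<le> max (1 - gamma * mu) ((r + 1) / 2)
           * efbv_lyap n fs grad gamma (theta_star r rav) xstar (x, h, (1 / real n) *\<^sub>R (\<Sum>i<n. h i))"
proof -
  interpret prob_space M by fact
  define c where "c = gamma / (2 * theta_star r rav)"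
  define G where "G = (1 / real n) * (\<Sum>i<n. (norm (v i))^2)"
  define E where "E w = (norm ((1 / real n) *\<^sub>R (\<Sum>i<n. nu *\<^sub>R D i w (v i) - v i)))^2" for w
  define S where "S w = (1 / real n) * (\<Sum>i<n. (norm (v i - lam *\<^sub>R D i w (v i)))^2)" for w
  have c: "0 < c" unfolding c_def using gamma_pos theta_star_pos[OF r_pos r_lt1 rav_pos] by simp
  have Q: "Q = (\<lambda>w. F x - F xstar - gamma / 2 * (norm (gradF x))^2 + gamma / 2 * E w
    + c * (1 + s_star r) * S w)"
    unfolding Q_def E_def S_def c_def ..
  note average = compressor_average_second_moment[OF assms(3) compressors average_variance, of nu]
  have E_int: "integrable M E" and E_le: "(\<integral>w. E w \<partial>M) \<le> rav * G"
    using average nu_range unfolding E_def G_def rav_eq by auto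
  have S_int: "integrable M S" and S_le: "(\<integral>w. S w \<partial>M) \<le> r * G"
    using compressor_relaxed_average_second_moment[OF assms(3) compressors, where lam=lam and v=v] lam_range
    unfolding S_def G_def r_eq by auto
  show "integrable M Q" unfolding Q using E_int S_int by auto
  have PL_step: "gamma * mu * (F x - F xstar) \<le> gamma / 2 * (norm (gradF x))^2"
    using mult_left_mono[OF PL[of x], of "gamma / 2"] gamma_pos by simp
  have "(\<integral>w. Q w \<partial>M) = F x - F xstar - gamma / 2 * (norm (gradF x))^2
      + gamma / 2 * (\<integral>w. E w \<partial>M) + c * (1 + s_star r) * (\<integral>w. S w \<partial>M)"
    unfolding Q using E_int S_int by (simp add: prob_space)
  also have "\<dots> \<le> (1 - gamma * mu) * (F x - F xstar) + (gamma / 2 * rav + c * (1 + s_star r) * r) * G"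
  proof -
    have "gamma / 2 * (\<integral>w. E w \<partial>M) \<le> gamma / 2 * (rav * G)"
      using E_le gamma_pos by (intro mult_left_mono) auto
    moreover have "c * (1 + s_star r) * (\<integral>w. S w \<partial>M) \<le> c * (1 + s_star r) * (r * G)"
      using S_le c s_star_pos[OF r_pos r_lt1] by (intro mult_left_mono) auto
    moreover have "(1 - gamma * mu) * (F x - F xstar) + (gamma / 2 * rav + c * (1 + s_star r) * r) * G
        = F x - F xstar - gamma * mu * (F x - F xstar) + gamma / 2 * (rav * G) + c * (1 + s_star r) * (r * G)"
      by (simp add: algebra_simps)
    ultimately show ?thesis using PL_step by linarith
  qed
  also have "\<dots> = (1 - gamma * mu) * (F x - F xstar) + (r + 1) / 2 * (c * G)"
    unfolding c_def theta_star_balance[OF r_pos r_lt1 rav_pos] by simp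
  also have "\<dots> \<le> max (1 - gamma * mu) ((r + 1) / 2) * (F x - F xstar + c * G)"
    using xstar_min[of x] c unfolding G_def distrib_left
    by (intro add_mono mult_right_mono) (auto simp: sum_nonneg)
  also have "\<dots> = max (1 - gamma * mu) ((r + 1) / 2)
      * efbv_lyap n fs grad gamma (theta_star r rav) xstar (x, h, (1 / real n) *\<^sub>R (\<Sum>i<n. h i))"
    unfolding efbv_lyap_def F_eq c_def G_def v_def by simp
  finally show "(\<integral>w. Q w \<partial>M) \<le> max (1 - gamma * mu) ((r + 1) / 2)
      * efbv_lyap n fs grad gamma (theta_star r rav) xstar (x, h, (1 / real n) *\<^sub>R (\<Sum>i<n. h i))" .
qed

lemma efbv_lyap_step_expectation:
  fixes D :: "nat \<Rightarrow> 'w \<Rightarrow> 'a \<Rightarrow> 'a"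
  assumes "prob_space M" and compressors: "\<And>i. i < n \<Longrightarrow> compressor_class M (D i) eta om"
    and average_variance: "\<And>v. (\<integral>w. (norm ((1 / real n) *\<^sub>R
             (\<Sum>i<n. D i w (v i) - (\<integral>w. D i w (v i) \<partial>M))))^2 \<partial>M)
           \<le> om_av / real n * (\<Sum>i<n. (norm (v i))^2)"
    and average_state: "snd (snd st) = (1 / real n) *\<^sub>R (\<Sum>i<n. fst (snd st) i)"
  shows "(\<integral>\<^sup>+w. ennreal (efbv_lyap n fs grad gamma (theta_star r rav) xstar
            (efbv_step n gamma lam nu grad (\<lambda>i. D i w) st)) \<partial>M)
         \<le> ennreal (max (1 - gamma * mu) ((r + 1) / 2))
           * ennreal (efbv_lyap n fs grad gamma (theta_star r rav) xstar st)"
proof -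
  obtain x h where st: "st = (x, h, (1 / real n) *\<^sub>R (\<Sum>i<n. h i))"
    using average_state by (cases st) auto
  note bound = efbv_step_bound_expectation[OF assms(1-3), where x=x and h=h]
  let ?Q = "\<lambda>w. F x - F xstar - gamma / 2 * (norm (gradF x))^2
    + gamma / 2 * (norm ((1 / real n) *\<^sub>R (\<Sum>i<n. nu *\<^sub>R D i w (grad i x - h i) - (grad i x - h i))))^2
    + gamma / (2 * theta_star r rav) * (1 + s_star r)
      * ((1 / real n) * (\<Sum>i<n. (norm (grad i x - h i - lam *\<^sub>R D i w (grad i x - h i)))^2))"
  have pointwise: "efbv_lyap n fs grad gamma (theta_star r rav) xstar
      (efbv_step n gamma lam nu grad (\<lambda>i. D i w) st) \<le> ?Q w" for w
    unfolding st by (rule efbv_lyap_step_le)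
  have "(\<integral>\<^sup>+w. ennreal (efbv_lyap n fs grad gamma (theta_star r rav) xstar
      (efbv_step n gamma lam nu grad (\<lambda>i. D i w) st)) \<partial>M) \<le> (\<integral>\<^sup>+w. ennreal (?Q w) \<partial>M)"
    by (intro nn_integral_mono ennreal_leI pointwise)
  also have "\<dots> = ennreal (\<integral>w. ?Q w \<partial>M)"
    using bound(1) order_trans[OF efbv_lyap_nonneg pointwise] by (intro nn_integral_eq_integral) auto
  also have "\<dots> \<le> ennreal (max (1 - gamma * mu) ((r + 1) / 2)
      * efbv_lyap n fs grad gamma (theta_star r rav) xstar st)"
    unfolding st using bound(2) by (rule ennreal_leI)
  finally show ?thesis
    using r_pos by (simp add: ennreal_mult' le_max_iff_disj)
qed

lemma efbv_state_measurable_iterate: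
  fixes C :: "nat \<Rightarrow> nat \<Rightarrow> 'a \<Rightarrow> 'b \<Rightarrow> 'a"
  assumes C: "\<And>i t. (\<lambda>(x, b). C i t x b) \<in> borel \<Otimes>\<^sub>M N \<rightarrow>\<^sub>M borel" and "t \<le> T"
  shows "efbv_state_measurable n (PiM {..<T} (\<lambda>_. N))
           (\<lambda>ys. efbv n gamma lam nu grad (\<lambda>t i x. C i t x (ys t)) x0 h0 t)"
  using \<open>t \<le> T\<close>
proof (induction t)
  case 0
  show ?case by (simp add: efbv_state_measurable_const)
next
  case (Suc t)
  have "(\<lambda>ys. ys t) \<in> PiM {..<T} (\<lambda>_. N) \<rightarrow>\<^sub>M N"
    using Suc.prems by (intro measurable_component_singleton) simp
  with Suc show ?case
    unfolding efbv_Suc_step by (intro efbv_state_measurable_step[OF _ _ C grad_measurable]) auto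
qed

lemma efbv_lyap_iterate_measurable:
  fixes C :: "nat \<Rightarrow> nat \<Rightarrow> 'a \<Rightarrow> 'b \<Rightarrow> 'a"
  assumes C: "\<And>i t. (\<lambda>(x, b). C i t x b) \<in> borel \<Otimes>\<^sub>M N \<rightarrow>\<^sub>M borel"
  shows "(\<lambda>ys. efbv_lyap n fs grad gamma theta xstar
            (efbv n gamma lam nu grad (\<lambda>t i x. C i t x (ys t)) x0 h0 t))
           \<in> borel_measurable (PiM {..<t} (\<lambda>_. N))"
    and "(\<lambda>(ys, b). efbv_lyap n fs grad gamma theta xstar
            (efbv_step n gamma lam nu grad (\<lambda>i x. C i t x b)
              (efbv n gamma lam nu grad (\<lambda>t i x. C i t x (ys t)) x0 h0 t)))
           \<in> borel_measurable (PiM {..<t} (\<lambda>_. N) \<Otimes>\<^sub>M N)"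
proof -
  note iterate = efbv_state_measurable_iterate[OF C order_refl, of t]
  show "(\<lambda>ys. efbv_lyap n fs grad gamma theta xstar
      (efbv n gamma lam nu grad (\<lambda>t i x. C i t x (ys t)) x0 h0 t)) \<in> borel_measurable (PiM {..<t} (\<lambda>_. N))"
    by (rule efbv_lyap_measurable[OF iterate fs_measurable grad_measurable])
  have "efbv_state_measurable n (PiM {..<t} (\<lambda>_. N) \<Otimes>\<^sub>M N)
      (\<lambda>p. efbv n gamma lam nu grad (\<lambda>t i x. C i t x (fst p t)) x0 h0 t)"
    using iterate unfolding efbv_state_measurable_def
    by (auto intro: measurable_compose[OF measurable_fst])
  from efbv_state_measurable_step[OF this measurable_snd C grad_measurable]
  show "(\<lambda>(ys, b). efbv_lyap n fs grad gamma theta xstar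
      (efbv_step n gamma lam nu grad (\<lambda>i x. C i t x b)
        (efbv n gamma lam nu grad (\<lambda>t i x. C i t x (ys t)) x0 h0 t)))
      \<in> borel_measurable (PiM {..<t} (\<lambda>_. N) \<Otimes>\<^sub>M N)"
    unfolding case_prod_beta by (rule efbv_lyap_measurable[OF _ fs_measurable grad_measurable])
qed

end

theorem theorem1:
  fixes n :: nat
    and fs :: "nat \<Rightarrow> 'a::euclidean_space \<Rightarrow> real"
    and grad :: "nat \<Rightarrow> 'a \<Rightarrow> 'a"
    and Ls :: "nat \<Rightarrow> real" and L :: real and mu :: real
    and xstar :: 'a
    and M :: "'w measure" and N :: "'b measure"
    and xi :: "nat \<Rightarrow> 'w \<Rightarrow> 'b"
    and C :: "nat \<Rightarrow> nat \<Rightarrow> 'a \<Rightarrow> 'b \<Rightarrow> 'a"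
    and eta om om_av gamma lam nu :: real
    and x0 :: 'a and h0 :: "nat \<Rightarrow> 'a"
  defines "F \<equiv> (\<lambda>x. (1 / real n) * (\<Sum>i<n. fs i x))"
    and "gradF \<equiv> (\<lambda>x. (1 / real n) *\<^sub>R (\<Sum>i<n. grad i x))"
    and "Lt \<equiv> sqrt ((1 / real n) * (\<Sum>i<n. (Ls i)^2))"
    and "r \<equiv> efbv_r lam eta om"
    and "rav \<equiv> efbv_r nu eta om_av"
    and "EC \<equiv> (\<lambda>i t x. \<integral>w. C i t x (xi t w) \<partial>M)"
  assumes n_pos: "n \<ge> 1"
    and convex: "\<And>i. i < n \<Longrightarrow> convex_on UNIV (fs i)"
    and deriv: "\<And>i x. i < n \<Longrightarrow> (fs i has_derivative (\<lambda>v. grad i x \<bullet> v)) (at x)"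
    and smooth_i: "\<And>i x y. i < n \<Longrightarrow> norm (grad i x - grad i y) \<le> Ls i * norm (x - y)"
    and smooth_f: "\<And>x y. norm (gradF x - gradF y) \<le> L * norm (x - y)"
    and L_le: "L \<le> Lt"
    and xstar_min: "\<And>x. F xstar \<le> F x"
    and mu_pos: "mu > 0"
    and PL: "\<And>x. (norm (gradF x))^2 \<ge> 2 * mu * (F x - F xstar)"
    \<comment> \<open>randomness: independent per-iteration seeds xi t; C_i^t(x) = C i t x (xi t)\<close>
    and prob: "prob_space M"
    and xi_meas: "\<And>t. xi t \<in> M \<rightarrow>\<^sub>M N"
    and xi_indep: "prob_space.indep_vars M (\<lambda>_. N) xi UNIV"
    and C_meas: "\<And>i t. (\<lambda>(x, b). C i t x b) \<in> borel \<Otimes>\<^sub>M N \<rightarrow>\<^sub>M borel"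
    and eta_range: "0 \<le> eta" "eta < 1"
    and om_nonneg: "0 \<le> om"
    and C_int: "\<And>i t x. i < n \<Longrightarrow> integrable M (\<lambda>w. C i t x (xi t w))"
    and C_bias: "\<And>i t x. i < n \<Longrightarrow> norm (EC i t x - x) \<le> eta * norm x"
    and C_var_int: "\<And>i t x. i < n \<Longrightarrow>
                      integrable M (\<lambda>w. (norm (C i t x (xi t w) - EC i t x))^2)"
    and C_var: "\<And>i t x. i < n \<Longrightarrow>
                  (\<integral>w. (norm (C i t x (xi t w) - EC i t x))^2 \<partial>M) \<le> om * (norm x)^2"
    and om_av_range: "0 \<le> om_av" "om_av \<le> om"
    and C_av: "\<And>t (xs :: nat \<Rightarrow> 'a).
                 (\<integral>w. (norm ((1 / real n) *\<^sub>R (\<Sum>i<n. C i t (xs i) (xi t w) - EC i t (xs i))))^2 \<partial>M)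
                   \<le> om_av / real n * (\<Sum>i<n. (norm (xs i))^2)"
    and r_pos: "r > 0" and rav_pos: "rav > 0"
    and nu_range: "0 < nu" "nu \<le> 1"
    and lam_range: "0 < lam" "lam \<le> 1"
    and r_lt1: "r < 1"
    and gamma_pos: "0 < gamma"
    and gamma_le: "gamma \<le> 1 / (L + Lt * sqrt (rav / r) * (1 / s_star r))"
  shows "\<forall>t. (\<integral>\<^sup>+ w. ennreal (efbv_lyap n fs grad gamma (theta_star r rav) xstar
                     (efbv n gamma lam nu grad (\<lambda>t i x. C i t x (xi t w)) x0 h0 t)) \<partial>M)
             \<le> ennreal ((max (1 - gamma * mu) ((r + 1) / 2)) ^ t *
                 efbv_lyap n fs grad gamma (theta_star r rav) xstar
                   (x0, h0, (1 / real n) *\<^sub>R (\<Sum>i<n. h0 i)))"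
proof -
  interpret efbv_pl n fs grad Ls L mu xstar eta om om_av gamma lam nu F gradF Lt r rav
    using assms unfolding F_def gradF_def Lt_def r_def rav_def by unfold_locales (rule refl)+
  interpret prob_space M by (rule prob)
  define G where "G t ys = efbv n gamma lam nu grad (\<lambda>t i x. C i t x (ys t)) x0 h0 t"
    for t and ys :: "nat \<Rightarrow> 'b"
  define step where "step t st b = efbv_step n gamma lam nu grad (\<lambda>i x. C i t x b) st"
    for t st b
  define \<Psi> where "\<Psi> st = ennreal (efbv_lyap n fs grad gamma (theta_star r rav) xstar st)" for st
  define \<rho> where "\<rho> = max (1 - gamma * mu) ((r + 1) / 2)"
  have \<rho>: "0 \<le> \<rho>" unfolding \<rho>_def using r_pos by (simp add: le_max_iff_disj)
  have compressors: "compressor_class M (\<lambda>w x. C i t x (xi t w)) eta om" if "i < n" for i t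
    using that C_int C_bias[unfolded EC_def] C_var_int[unfolded EC_def] C_var[unfolded EC_def]
    unfolding compressor_class_def by simp
  have "(\<integral>\<^sup>+w. \<Psi> (G t (\<lambda>s. xi s w)) \<partial>M) \<le> ennreal \<rho> ^ t * \<Psi> (G 0 (\<lambda>_. undefined))" for t
  proof (rule nn_integral_independent_iteration_le[where G=G and step=step and \<Phi>=\<Psi>, OF xi_meas xi_indep])
    show "G (Suc t) ys = step t (G t ys) (ys t)" for t ys
      unfolding G_def step_def by (rule efbv_Suc_step)
    show "G t ys = G t ys'" if "\<And>s. s < t \<Longrightarrow> ys s = ys' s" for t ys ys'
      unfolding G_def using that by (intro efbv_prefix_cong) auto
    show "(\<integral>\<^sup>+w. \<Psi> (step t (G t ys) (xi t w)) \<partial>M) \<le> ennreal \<rho> * \<Psi> (G t ys)" for t ys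
      unfolding \<Psi>_def step_def G_def \<rho>_def
      by (rule efbv_lyap_step_expectation[OF prob compressors C_av[unfolded EC_def] efbv_average_invariant])
  qed (use efbv_lyap_iterate_measurable[OF C_meas] in \<open>simp_all add: \<Psi>_def G_def step_def\<close>)
  then show ?thesis
    unfolding \<Psi>_def G_def \<rho>_def[symmetric] by (simp add: ennreal_mult'[OF zero_le_power[OF \<rho>]] ennreal_power[OF \<rho>])
qed

end
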